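(* Let $A$ be a locale and let $Q$ be an equivariantly supported reflexive based quantal frame with base locale $A$ which has a multiplicative unit. If $Q$ satisfies the inverse law, then it satisfies the unit laws.
   Context: An $A$-$A$-bimodule is a sup-lattice $M$ with actions $a\triangleright m$, $m\triangleleft a$ preserving joins in each variable, with $1_A\triangleright m=m$, $(a\wedge b)\triangleright m=a\triangleright(b\triangleright m)$, $m\triangleleft1_A=m$, $m\triangleleft(a\wedge b)=(m\triangleleft a)\triangleleft b$, $(a\triangleright m)\triangleleft b=a\triangleright(m\triangleleft b)$. An $A$-$A$-quantale is such a $Q$ with associative join-preserving multiplication and $(a\triangleright x)y=a\triangleright(xy)$, $(x\triangleleft a)y=x(a\triangleright y)$, $(xy)\triangleleft a=x(y\triangleleft a)$; involutive if there is a join-preserving $x\mapsto x^*$ with $x^{**}=x$, $(xy)^*=y^*x^*$, $(a\triangleright(x\triangleleft b))^*=b\triangleright(x^*\triangleleft a)$. $1_Q$ is the top. A support is a join-preserving $\varsigma:Q\to A$ with $\varsigma(1_Q)=1_A$, $\varsigma(x)\triangleright y\le xx^*y$, $\varsigma(x)\triangleright x=x$; equivariant if $\varsigma(a\triangleright x)=a\wedge\varsigma(x)$. A based quantal frame is an involutive $A$-$A$-quantale which is a frame with $(a\triangleright x)\wedge y=a\triangleright(x\wedge y)$, $(x\triangleleft a)\wedge y=(x\wedge y)\triangleleft a$; reflexive: a frame homomorphism $\upsilon:Q\to A$ with $\upsilon(a\triangleright1_Q)=a=\upsilon(1_Q\triangleleft a)$. Inverse law: $\upsilon(a)\triangleright1_Q=\bigvee_{xy^*\le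 a}x\wedge y$ for all $a\in Q$. Unit laws: $\bigvee_{xy\le a}\upsilon(x)\triangleright y=a$ for all $a\in Q$. *)

theory Defs
  imports Main
begin

unbundle lattice_syntax

definition is_frame :: "'a::complete_lattice itself \<Rightarrow> bool" where
  "is_frame _ \<longleftrightarrow> (\<forall>(a::'a) S. a \<sqinter> Sup S = Sup ((\<lambda>s. a \<sqinter> s) ` S))"

definition frame_hom :: "('q::complete_lattice \<Rightarrow> 'a::complete_lattice) \<Rightarrow> bool" where
  "frame_hom f \<longleftrightarrow> f top = top \<and> (\<forall>x y. f (x \<sqinter> y) = f x \<sqinter> f y)
      \<and> (\<forall>S. f (Sup S) = Sup (f ` S))"

text \<open>A-A-bimodule structure on the sup-lattice 'q, with A a locale (multiplication = meet,
  unit = top).  lact a m = a \<triangleright> m, ract m a = m \<triangleleft> a.\<close>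
definition AA_bimodule ::
  "('a::complete_lattice \<Rightarrow> 'q::complete_lattice \<Rightarrow> 'q) \<Rightarrow> ('q \<Rightarrow> 'a \<Rightarrow> 'q) \<Rightarrow> bool" where
  "AA_bimodule lact ract \<longleftrightarrow>
     (\<forall>S m. lact (Sup S) m = Sup ((\<lambda>a. lact a m) ` S)) \<and>
     (\<forall>a T. lact a (Sup T) = Sup (lact a ` T)) \<and>
     (\<forall>T a. ract (Sup T) a = Sup ((\<lambda>m. ract m a) ` T)) \<and>
     (\<forall>m S. ract m (Sup S) = Sup (ract m ` S)) \<and>
     (\<forall>m. lact top m = m) \<and>
     (\<forall>a b m. lact (a \<sqinter> b) m = lact a (lact b m)) \<and>
     (\<forall>m. ract m top = m) \<and>
     (\<forall>a b m. ract m (a \<sqinter> b) = ract (ract m a) b) \<and>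
     (\<forall>a b m. ract (lact a m) b = lact a (ract m b))"

definition AA_quantale ::
  "('a::complete_lattice \<Rightarrow> 'q::complete_lattice \<Rightarrow> 'q) \<Rightarrow> ('q \<Rightarrow> 'a \<Rightarrow> 'q)
   \<Rightarrow> ('q \<Rightarrow> 'q \<Rightarrow> 'q) \<Rightarrow> bool" where
  "AA_quantale lact ract mult \<longleftrightarrow>
     AA_bimodule lact ract \<and>
     (\<forall>x y z. mult (mult x y) z = mult x (mult y z)) \<and>
     (\<forall>S y. mult (Sup S) y = Sup ((\<lambda>x. mult x y) ` S)) \<and>
     (\<forall>x S. mult x (Sup S) = Sup (mult x ` S)) \<and>
     (\<forall>a x y. mult (lact a x) y = lact a (mult x y)) \<and>
     (\<forall>a x y. mult (ract x a) y = mult x (lact a y)) \<and>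
     (\<forall>a x y. ract (mult x y) a = mult x (ract y a))"

definition involutive_AA_quantale ::
  "('a::complete_lattice \<Rightarrow> 'q::complete_lattice \<Rightarrow> 'q) \<Rightarrow> ('q \<Rightarrow> 'a \<Rightarrow> 'q)
   \<Rightarrow> ('q \<Rightarrow> 'q \<Rightarrow> 'q) \<Rightarrow> ('q \<Rightarrow> 'q) \<Rightarrow> bool" where
  "involutive_AA_quantale lact ract mult invl \<longleftrightarrow>
     AA_quantale lact ract mult \<and>
     (\<forall>S. invl (Sup S) = Sup (invl ` S)) \<and>
     (\<forall>x. invl (invl x) = x) \<and>
     (\<forall>x y. invl (mult x y) = mult (invl y) (invl x)) \<and>
     (\<forall>a b x. invl (lact a (ract x b)) = lact b (ract (invl x) a))"

text \<open>Support (1_Q is the top of Q).\<close>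
definition is_support ::
  "('a::complete_lattice \<Rightarrow> 'q::complete_lattice \<Rightarrow> 'q) \<Rightarrow> ('q \<Rightarrow> 'q \<Rightarrow> 'q) \<Rightarrow> ('q \<Rightarrow> 'q)
   \<Rightarrow> ('q \<Rightarrow> 'a) \<Rightarrow> bool" where
  "is_support lact mult invl \<sigma> \<longleftrightarrow>
     (\<forall>S. \<sigma> (Sup S) = Sup (\<sigma> ` S)) \<and>
     \<sigma> top = top \<and>
     (\<forall>x y. lact (\<sigma> x) y \<le> mult (mult x (invl x)) y) \<and>
     (\<forall>x. lact (\<sigma> x) x = x)"

definition equivariant_support ::
  "('a::complete_lattice \<Rightarrow> 'q::complete_lattice \<Rightarrow> 'q) \<Rightarrow> ('q \<Rightarrow> 'q \<Rightarrow> 'q) \<Rightarrow> ('q \<Rightarrow> 'q)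
   \<Rightarrow> ('q \<Rightarrow> 'a) \<Rightarrow> bool" where
  "equivariant_support lact mult invl \<sigma> \<longleftrightarrow>
     is_support lact mult invl \<sigma> \<and> (\<forall>a x. \<sigma> (lact a x) = a \<sqinter> \<sigma> x)"

definition based_quantal_frame ::
  "('a::complete_lattice \<Rightarrow> 'q::complete_lattice \<Rightarrow> 'q) \<Rightarrow> ('q \<Rightarrow> 'a \<Rightarrow> 'q)
   \<Rightarrow> ('q \<Rightarrow> 'q \<Rightarrow> 'q) \<Rightarrow> ('q \<Rightarrow> 'q) \<Rightarrow> bool" where
  "based_quantal_frame lact ract mult invl \<longleftrightarrow>
     involutive_AA_quantale lact ract mult invl \<and>
     is_frame TYPE('q) \<and>
     (\<forall>a x y. lact a x \<sqinter> y = lact a (x \<sqinter> y)) \<and>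
     (\<forall>a x y. ract x a \<sqinter> y = ract (x \<sqinter> y) a)"

definition reflexive_bqf ::
  "('a::complete_lattice \<Rightarrow> 'q::complete_lattice \<Rightarrow> 'q) \<Rightarrow> ('q \<Rightarrow> 'a \<Rightarrow> 'q)
   \<Rightarrow> ('q \<Rightarrow> 'q \<Rightarrow> 'q) \<Rightarrow> ('q \<Rightarrow> 'q) \<Rightarrow> ('q \<Rightarrow> 'a) \<Rightarrow> bool" where
  "reflexive_bqf lact ract mult invl \<upsilon> \<longleftrightarrow>
     based_quantal_frame lact ract mult invl \<and>
     frame_hom \<upsilon> \<and>
     (\<forall>a. \<upsilon> (lact a top) = a \<and> \<upsilon> (ract top a) = a)"

definition has_mult_unit :: "('q \<Rightarrow> 'q \<Rightarrow> 'q) \<Rightarrow> bool" where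
  "has_mult_unit mult \<longleftrightarrow> (\<exists>e. \<forall>x. mult e x = x \<and> mult x e = x)"

definition inverse_law ::
  "('a::complete_lattice \<Rightarrow> 'q::complete_lattice \<Rightarrow> 'q) \<Rightarrow> ('q \<Rightarrow> 'q \<Rightarrow> 'q) \<Rightarrow> ('q \<Rightarrow> 'q)
   \<Rightarrow> ('q \<Rightarrow> 'a) \<Rightarrow> bool" where
  "inverse_law lact mult invl \<upsilon> \<longleftrightarrow>
     (\<forall>a. lact (\<upsilon> a) top = Sup {x \<sqinter> y | x y. mult x (invl y) \<le> a})"

definition unit_laws ::
  "('a::complete_lattice \<Rightarrow> 'q::complete_lattice \<Rightarrow> 'q) \<Rightarrow> ('q \<Rightarrow> 'q \<Rightarrow> 'q)
   \<Rightarrow> ('q \<Rightarrow> 'a) \<Rightarrow> bool" where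
  "unit_laws lact mult \<upsilon> \<longleftrightarrow>
     (\<forall>a. Sup {lact (\<upsilon> x) y | x y. mult x y \<le> a} = a)"

end

theory Submission
  imports Defs
begin

text \<open>The upper bound comes from stability: the support gives \<open>t \<le> t t\<^sup>* t\<close>, so every
  \<open>t = y \<sqinter> u \<sqinter> v\<close> with \<open>u v\<^sup>* \<le> x\<close> lies below \<open>u v\<^sup>* y \<le> x y\<close>; by the inverse law and
  the frame law these \<open>t\<close> join up to \<open>\<upsilon>(x) \<triangleright> y\<close>.  The lower bound comes from the unit \<open>e\<close>:
  it is self-adjoint, so the inverse law puts \<open>e\<close> below \<open>\<upsilon>(e) \<triangleright> 1\<close>, whence \<open>\<upsilon>(e)\<close> acts
  trivially and \<open>a = \<upsilon>(e) \<triangleright> a\<close> with \<open>e a \<le> a\<close>.\<close>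

lemma mono_if_Sup_preserving:
  fixes f :: "'a::complete_lattice \<Rightarrow> 'b::complete_lattice"
  assumes "\<forall>S. f (Sup S) = Sup (f ` S)"
  shows "mono f"
proof
  fix x y :: 'a
  assume "x \<le> y"
  then have "f y = f x \<squnion> f y"
    using assms[rule_format, of "{x, y}"] by (simp add: sup_absorb2)
  then show "f x \<le> f y"
    by (metis sup.cobounded1)
qed

lemma AA_quantale_mult_mono:
  assumes "AA_quantale lact ract mult" and "x \<le> x'" and "y \<le> y'"
  shows "mult x y \<le> mult x' y'"
proof -
  have "mono (\<lambda>x. mult x y)" "mono (mult x')"
    using assms(1) unfolding AA_quantale_def by (auto intro: mono_if_Sup_preserving)
  then show ?thesis
    using assms(2,3) by (metis monoD order.trans)
qed

lemma involutive_AA_quantale_invl_mono: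
  assumes "involutive_AA_quantale lact ract mult invl"
  shows "mono invl"
  using assms unfolding involutive_AA_quantale_def by (auto intro: mono_if_Sup_preserving)

lemma involutive_AA_quantale_unit_self_adjoint:
  assumes "involutive_AA_quantale lact ract mult invl"
    and "\<And>x. mult x e = x"
  shows "invl e = e"
proof -
  have invl: "\<And>x. invl (invl x) = x" "\<And>x y. invl (mult x y) = mult (invl y) (invl x)"
    using assms(1) unfolding involutive_AA_quantale_def by auto
  have "invl e = mult (invl e) e"
    using assms(2) by simp
  also have "\<dots> = invl (mult (invl e) e)"
    by (simp only: invl)
  also have "\<dots> = e"
    using assms(2) invl(1) by simp
  finally show ?thesis .
qed

lemma support_stable:
  assumes "is_support lact mult invl \<sigma>"
  shows "t \<le> mult (mult t (invl t)) t"
proof -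
  have "t = lact (\<sigma> t) t"
    using assms unfolding is_support_def by simp
  also have "\<dots> \<le> mult (mult t (invl t)) t"
    using assms unfolding is_support_def by blast
  finally show ?thesis .
qed

lemma supported_meet_le_mult:
  assumes "involutive_AA_quantale lact ract mult invl" and "is_support lact mult invl \<sigma>"
    and "mult u (invl v) \<le> x" and "t \<le> u" and "t \<le> v" and "t \<le> y"
  shows "t \<le> mult x y"
proof -
  have Q: "AA_quantale lact ract mult"
    using assms(1) unfolding involutive_AA_quantale_def by simp
  have "invl t \<le> invl v"
    using involutive_AA_quantale_invl_mono[OF assms(1)] assms(5) by (rule monoD)
  then have "mult t (invl t) \<le> x"
    using AA_quantale_mult_mono[OF Q assms(4)] assms(3) order.trans by blast
  then have "mult (mult t (invl t)) t \<le> mult x y"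
    using AA_quantale_mult_mono[OF Q _ assms(6)] by blast
  then show ?thesis
    using support_stable[OF assms(2)] order.trans by blast
qed

lemma inverse_law_lact_le_mult:
  assumes "based_quantal_frame lact ract mult invl" and "is_support lact mult invl \<sigma>"
    and "inverse_law lact mult invl \<upsilon>"
  shows "lact (\<upsilon> x) y \<le> mult x y"
proof -
  have inv: "involutive_AA_quantale lact ract mult invl" and frame: "is_frame TYPE('b)"
    and meet: "\<And>a x y. lact a x \<sqinter> y = lact a (x \<sqinter> y)"
    using assms(1) unfolding based_quantal_frame_def by auto
  define T where "T = {u \<sqinter> v | u v. mult u (invl v) \<le> x}"
  have "lact (\<upsilon> x) y = y \<sqinter> lact (\<upsilon> x) top"
    using meet[of "\<upsilon> x" top y] by (simp add: inf_commute)
  also have "\<dots> = Sup ((\<sqinter>) y ` T)"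
    using assms(3) frame unfolding inverse_law_def is_frame_def T_def by simp
  also have "\<dots> \<le> mult x y"
  proof (rule Sup_least)
    fix t
    assume "t \<in> (\<sqinter>) y ` T"
    then obtain u v where t: "t = y \<sqinter> (u \<sqinter> v)" and uv: "mult u (invl v) \<le> x"
      unfolding T_def by blast
    show "t \<le> mult x y"
      by (rule supported_meet_le_mult[OF inv assms(2) uv]) (auto simp: t intro: le_infI2)
  qed
  finally show ?thesis .
qed

lemma inverse_law_unit_lact_trivial:
  assumes "based_quantal_frame lact ract mult invl" and "inverse_law lact mult invl \<upsilon>"
    and "\<And>x. mult e x = x" and "\<And>x. mult x e = x"
  shows "lact (\<upsilon> e) a = a"
proof -
  have inv: "involutive_AA_quantale lact ract mult invl"
    and meet: "\<And>a x y. lact a x \<sqinter> y = lact a (x \<sqinter> y)"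
    using assms(1) unfolding based_quantal_frame_def by auto
  have mult_lact: "\<And>a x y. mult (lact a x) y = lact a (mult x y)"
    using inv unfolding involutive_AA_quantale_def AA_quantale_def by auto
  have "mult e (invl e) \<le> e"
    using involutive_AA_quantale_unit_self_adjoint[OF inv assms(4)] assms(3) by simp
  then have "e \<le> lact (\<upsilon> e) top"
    using assms(2) unfolding inverse_law_def by (auto intro!: Sup_upper exI[of _ e])
  then have "lact (\<upsilon> e) e = e"
    using meet[of "\<upsilon> e" top e] by (simp add: inf_absorb2)
  then show ?thesis
    by (metis assms(3) mult_lact)
qed

lemma unit_laws_intro:
  assumes "\<And>x y. lact (\<upsilon> x) y \<le> mult x y"
    and "\<And>x. mult e x = x" and "\<And>a. lact (\<upsilon> e) a = a"
  shows "unit_laws lact mult \<upsilon>"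
  unfolding unit_laws_def
proof
  fix a
  show "Sup {lact (\<upsilon> x) y | x y. mult x y \<le> a} = a"
  proof (rule antisym)
    show "Sup {lact (\<upsilon> x) y | x y. mult x y \<le> a} \<le> a"
    proof (rule Sup_least)
      fix z
      assume "z \<in> {lact (\<upsilon> x) y | x y. mult x y \<le> a}"
      then obtain x y where z: "z = lact (\<upsilon> x) y" and xy: "mult x y \<le> a"
        by blast
      show "z \<le> a"
        using order_trans[OF assms(1) xy] by (simp only: z)
    qed
    have "mult e a \<le> a"
      using assms(2) by simp
    then have "lact (\<upsilon> e) a \<le> Sup {lact (\<upsilon> x) y | x y. mult x y \<le> a}"
      by (blast intro: Sup_upper)
    then show "a \<le> Sup {lact (\<upsilon> x) y | x y. mult x y \<le> a}"
      using assms(3) by simp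
  qed
qed

theorem corollary5p12:
  fixes lact :: "'a::complete_lattice \<Rightarrow> 'q::complete_lattice \<Rightarrow> 'q"
    and ract :: "'q \<Rightarrow> 'a \<Rightarrow> 'q"
    and mult :: "'q \<Rightarrow> 'q \<Rightarrow> 'q"
    and invl :: "'q \<Rightarrow> 'q"
    and \<upsilon> :: "'q \<Rightarrow> 'a"
  assumes "is_frame TYPE('a)"
    and "reflexive_bqf lact ract mult invl \<upsilon>"
    and "\<exists>\<sigma>. equivariant_support lact mult invl \<sigma>"
    and "has_mult_unit mult"
    and "inverse_law lact mult invl \<upsilon>"
  shows "unit_laws lact mult \<upsilon>"
proof -
  obtain \<sigma> where \<sigma>: "is_support lact mult invl \<sigma>"
    using assms(3) unfolding equivariant_support_def by blast
  obtain e where e: "\<And>x. mult e x = x" "\<And>x. mult x e = x"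
    using assms(4) unfolding has_mult_unit_def by blast
  have bqf: "based_quantal_frame lact ract mult invl"
    using assms(2) unfolding reflexive_bqf_def by simp
  show ?thesis
    using inverse_law_lact_le_mult[OF bqf \<sigma> assms(5)] e(1)
      inverse_law_unit_lact_trivial[OF bqf assms(5) e]
    by (rule unit_laws_intro)
qed

end
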